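(* Let $\mathcal F=\{f_0,f_1,\ldots\}$ be a (countable) family of bounded arithmetic functions with $\mathrm{AE}(\mathcal F)<+\infty$. Then for every $\epsilon>0$ there exists $\delta>0$ such that for every family $\mathcal G=\{g_0,g_1,\ldots\}\subseteq l^\infty(\mathbb N)$ (indexed by the same index set) with $\sup_{i}\|g_i-f_i\|_{l^\infty}<\delta$, one has $\mathrm{AE}(\mathcal G)>\mathrm{AE}(\mathcal F)-\epsilon$.
   Context: $\mathbb N=\{0,1,2,\ldots\}$ and $l^\infty(\mathbb N)$ is the C*-algebra of bounded complex-valued functions on $\mathbb N$ with the sup norm. Let $\sigma_A:l^\infty(\mathbb N)\to l^\infty(\mathbb N)$ be $(\sigma_Af)(n)=f(n+1)$. An anqie is a unital C*-subalgebra $\mathcal A\subseteq l^\infty(\mathbb N)$ with $\sigma_A(\mathcal A)\subseteq\mathcal A$. For $\mathcal F\subseteq l^\infty(\mathbb N)$, $\mathcal A_{\mathcal F}$ denotes the smallest anqie containing $\mathcal F$. For an anqie $\mathcal A$ with maximal ideal space $X$ (weak* topology), the map $A:X\to X$, $(A\rho)(f)=\rho(\sigma_Af)$, is continuous; the anqie entropy $\mathrm{AE}(\mathcal A)\in[0,\infty]$ is the topological entropy $h(A)$, and $\mathrm{AE}(\mathcal F)=\mathrm{AE}(\mathcal A_{\mathcal F})$. *)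

theory Defs
  imports "HOL-Analysis.Analysis"
begin

type_synonym arith = "nat \<Rightarrow> complex"

definition linf :: "arith set" where
  "linf = {f. bounded (range f)}"

definition supnorm :: "arith \<Rightarrow> real" where
  "supnorm f = Sup (range (\<lambda>n. cmod (f n)))"

definition shiftA :: "arith \<Rightarrow> arith" where
  "shiftA f = (\<lambda>n. f (Suc n))"

text \<open>Anqie: unital C*-subalgebra of l-infinity(N) invariant under the shift.\<close>
definition anqie :: "arith set \<Rightarrow> bool" where
  "anqie A \<longleftrightarrow> A \<subseteq> linf
     \<and> (\<lambda>n. 1) \<in> A
     \<and> (\<forall>f\<in>A. \<forall>g\<in>A. (\<lambda>n. f n + g n) \<in> A)
     \<and> (\<forall>f\<in>A. \<forall>g\<in>A. (\<lambda>n. f n * g n) \<in> A)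
     \<and> (\<forall>c. \<forall>f\<in>A. (\<lambda>n. c * f n) \<in> A)
     \<and> (\<forall>f\<in>A. (\<lambda>n. cnj (f n)) \<in> A)
     \<and> (\<forall>s f. (\<forall>k. s k \<in> A) \<and> f \<in> linf
              \<and> (\<lambda>k. supnorm (\<lambda>n. s k n - f n)) \<longlonglongrightarrow> 0 \<longrightarrow> f \<in> A)
     \<and> (\<forall>f\<in>A. shiftA f \<in> A)"

definition anqie_gen :: "arith set \<Rightarrow> arith set" where
  "anqie_gen F = \<Inter> {A. anqie A \<and> F \<subseteq> A}"

text \<open>Maximal ideal space: nonzero multiplicative linear functionals on A
  (characters), represented as functions vanishing off A.\<close>
definition chars :: "arith set \<Rightarrow> (arith \<Rightarrow> complex) set" where
  "chars A = {\<rho>. (\<forall>f\<in>A. \<forall>g\<in>A. \<rho> (\<lambda>n. f n + g n) = \<rho> f + \<rho> g)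
                \<and> (\<forall>f\<in>A. \<forall>g\<in>A. \<rho> (\<lambda>n. f n * g n) = \<rho> f * \<rho> g)
                \<and> (\<forall>c. \<forall>f\<in>A. \<rho> (\<lambda>n. c * f n) = c * \<rho> f)
                \<and> \<rho> (\<lambda>n. 1) = 1
                \<and> (\<forall>f. f \<notin> A \<longrightarrow> \<rho> f = 0)}"

text \<open>Weak* topology: the topology of pointwise convergence, i.e. the
  subspace of the product topology (coordinates outside A are constantly 0).\<close>
definition max_ideal_space :: "arith set \<Rightarrow> (arith \<Rightarrow> complex) topology" where
  "max_ideal_space A = subtopology euclidean (chars A)"

definition dual_shift :: "arith set \<Rightarrow> (arith \<Rightarrow> complex) \<Rightarrow> (arith \<Rightarrow> complex)" where
  "dual_shift A \<rho> = (\<lambda>f. if f \<in> A then \<rho> (shiftA f) else 0)"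

definition cover_num :: "'a topology \<Rightarrow> 'a set set \<Rightarrow> nat" where
  "cover_num X \<U> = Inf {card \<V> | \<V>. \<V> \<subseteq> \<U> \<and> finite \<V> \<and> \<Union>\<V> = topspace X}"

definition join_cover :: "'a topology \<Rightarrow> ('a \<Rightarrow> 'a) \<Rightarrow> 'a set set \<Rightarrow> nat \<Rightarrow> 'a set set" where
  "join_cover X T \<U> n =
     {topspace X \<inter> (\<Inter>i<n. (T ^^ i) -` U i) | U. \<forall>i<n. U i \<in> \<U>}"

definition open_covers :: "'a topology \<Rightarrow> 'a set set set" where
  "open_covers X = {\<U>. (\<forall>U\<in>\<U>. openin X U) \<and> \<Union>\<U> = topspace X}"

definition cover_entropy :: "'a topology \<Rightarrow> ('a \<Rightarrow> 'a) \<Rightarrow> 'a set set \<Rightarrow> real" where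
  "cover_entropy X T \<U> =
     lim (\<lambda>n. ln (real (cover_num X (join_cover X T \<U> n))) / real n)"

definition top_entropy :: "'a topology \<Rightarrow> ('a \<Rightarrow> 'a) \<Rightarrow> ereal" where
  "top_entropy X T = (SUP \<U>\<in>open_covers X. ereal (cover_entropy X T \<U>))"

definition anqie_entropy :: "arith set \<Rightarrow> ereal" where
  "anqie_entropy F = top_entropy (max_ideal_space (anqie_gen F)) (dual_shift (anqie_gen F))"

end

theory Submission
  imports Defs
begin

text \<open>A character of an anqie is determined by its values on the shifts of the generators, so,
  by compactness of the maximal ideal space, an open cover \<open>\<U>\<close> of it is refined by all
  boxes of some radius \<open>\<eta>\<close> in finitely many of these coordinates. Evaluations at integer times
  are characters, and every character is approximated by one of them; hence the cover number of
  the \<open>n\<close>-th join of \<open>\<U>\<close> is at most the size of a maximal \<open>\<eta>/2\<close>-separated set of times for the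
  first \<open>n\<close> shifts. If the generators are moved by less than \<open>\<eta>/8\<close>, such times remain
  separated by the boxes of radius \<open>\<eta>/8\<close> of the perturbed family, so the cover numbers of the
  perturbed system under this box cover are at least as large. Both sequences are submultiplicative,
  and Fekete's lemma turns the inequality into one of entropies.\<close>

section \<open>Bounded sequences and anqies\<close>

lemma linf_iff: "f \<in> linf \<longleftrightarrow> (\<exists>B. \<forall>n. cmod (f n) \<le> B)"
  unfolding linf_def bounded_iff by auto

lemma norm_le_supnorm: "f \<in> linf \<Longrightarrow> cmod (f n) \<le> supnorm f"
  unfolding supnorm_def linf_iff by (rule cSup_upper) (auto simp: bdd_above_def)

lemma supnorm_le: "(\<And>n. cmod (f n) \<le> B) \<Longrightarrow> supnorm f \<le> B"
  unfolding supnorm_def by (rule cSup_least) auto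

lemma supnorm_nonneg: "f \<in> linf \<Longrightarrow> 0 \<le> supnorm f"
  using norm_le_supnorm[of f 0] norm_ge_zero order_trans by blast

lemma funpow_shiftA: "(shiftA ^^ m) f = (\<lambda>n. f (n + m))"
proof -
  have "(shiftA ^^ m) f n = f (n + m)" for n
    by (induction m arbitrary: n) (auto simp: shiftA_def)
  then show ?thesis by blast
qed

lemma supnorm_funpow_shiftA_le: "f \<in> linf \<Longrightarrow> supnorm ((shiftA ^^ m) f) \<le> supnorm f"
  by (rule supnorm_le) (simp add: funpow_shiftA norm_le_supnorm)

lemma supnorm_tendsto_zero:
  assumes "\<And>k n. cmod (h k n) \<le> e k" and "e \<longlonglongrightarrow> 0"
  shows "(\<lambda>k. supnorm (h k)) \<longlonglongrightarrow> 0"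
proof (rule Lim_null_comparison[OF _ assms(2)])
  have "\<bar>supnorm (h k)\<bar> \<le> e k" for k
  proof -
    have "h k \<in> linf" using assms(1) by (auto simp: linf_iff)
    then show ?thesis using supnorm_nonneg supnorm_le assms(1) by (simp add: abs_le_iff)
  qed
  then show "\<forall>\<^sub>F k in sequentially. norm (supnorm (h k)) \<le> e k" by simp
qed

lemma geometric_inverse_approx:
  fixes \<beta> \<eta> M :: real
  assumes \<eta>: "0 < \<eta>" and "\<eta> \<le> \<beta>" "\<beta> < M"
  shows "\<bar>(1/M) * (\<Sum>k<N. (1 - \<beta> / M) ^ k) - 1 / \<beta>\<bar> \<le> (1 - \<eta> / M) ^ N / \<eta>"
proof -
  define d where "d = 1 - \<beta> / M"
  have \<beta>: "0 < \<beta>" and M: "0 < M" using assms by linarith+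
  have "d \<noteq> 1" "1 - d = \<beta> / M" unfolding d_def using \<beta> M by auto
  then have "(\<Sum>k<N. d ^ k) = M * (1 - d ^ N) / \<beta>" by (simp add: sum_gp_strict)
  then have "(1/M) * (\<Sum>k<N. d ^ k) - 1 / \<beta> = - (d ^ N / \<beta>)"
    using M by (simp add: diff_divide_distrib)
  moreover have d: "0 \<le> d" "d \<le> 1 - \<eta> / M"
    unfolding d_def using assms M by (auto simp: field_simps)
  then have "d ^ N / \<beta> \<le> (1 - \<eta> / M) ^ N / \<eta>"
    using \<eta> \<open>\<eta> \<le> \<beta>\<close> by (intro frac_le power_mono zero_le_power) auto
  ultimately show ?thesis using d(1) \<beta> by (simp add: d_def)
qed

lemma anqie_linf: "anqie linf"
proof -
  have add: "(\<lambda>n. f n + g n) \<in> linf" if "f \<in> linf" "g \<in> linf" for f g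
  proof -
    from that obtain B C where "\<forall>n. cmod (f n) \<le> B" "\<forall>n. cmod (g n) \<le> C" by (auto simp: linf_iff)
    then have "\<forall>n. cmod (f n + g n) \<le> B + C" by (meson add_mono norm_triangle_ineq order_trans)
    then show ?thesis by (auto simp: linf_iff)
  qed
  have mul: "(\<lambda>n. f n * g n) \<in> linf" if "f \<in> linf" "g \<in> linf" for f g
  proof -
    from that obtain B C where B: "\<forall>n. cmod (f n) \<le> B" and C: "\<forall>n. cmod (g n) \<le> C" by (auto simp: linf_iff)
    have "\<forall>n. cmod (f n * g n) \<le> B * C"
      using B C by (simp add: norm_mult mult_mono')
    then show ?thesis by (auto simp: linf_iff)
  qed
  have sc: "(\<lambda>n. c * f n) \<in> linf" if "f \<in> linf" for f c
    using mul[of "\<lambda>n. c" f] that by (auto simp: linf_iff)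
  have cj: "(\<lambda>n. cnj (f n)) \<in> linf" if "f \<in> linf" for f
    using that by (auto simp: linf_iff)
  have sh: "shiftA f \<in> linf" if "f \<in> linf" for f
    using that by (auto simp: linf_iff shiftA_def)
  show ?thesis unfolding anqie_def using add mul sc cj sh by (auto simp: linf_iff)
qed

context
  fixes A assumes anqie: "anqie A"
begin

lemma anqie_subset_linf: "f \<in> A \<Longrightarrow> f \<in> linf"
  using anqie unfolding anqie_def by blast

lemma anqie_one: "(\<lambda>n. 1) \<in> A"
  using anqie unfolding anqie_def by blast

lemma anqie_add: "f \<in> A \<Longrightarrow> g \<in> A \<Longrightarrow> (\<lambda>n. f n + g n) \<in> A"
  using anqie unfolding anqie_def by blast

lemma anqie_mult: "f \<in> A \<Longrightarrow> g \<in> A \<Longrightarrow> (\<lambda>n. f n * g n) \<in> A"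
  using anqie unfolding anqie_def by blast

lemma anqie_scale: "f \<in> A \<Longrightarrow> (\<lambda>n. c * f n) \<in> A"
  using anqie unfolding anqie_def by blast

lemma anqie_cnj: "f \<in> A \<Longrightarrow> (\<lambda>n. cnj (f n)) \<in> A"
  using anqie unfolding anqie_def by blast

lemma anqie_shiftA: "f \<in> A \<Longrightarrow> shiftA f \<in> A"
  using anqie unfolding anqie_def by blast

lemma anqie_closed:
  "(\<And>k. s k \<in> A) \<Longrightarrow> f \<in> linf \<Longrightarrow> (\<lambda>k. supnorm (\<lambda>n. s k n - f n)) \<longlonglongrightarrow> 0 \<Longrightarrow> f \<in> A"
  using anqie unfolding anqie_def by blast

lemma anqie_const: "(\<lambda>n. c) \<in> A"
  using anqie_scale[OF anqie_one, of c] by simp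

lemma anqie_diff: "f \<in> A \<Longrightarrow> g \<in> A \<Longrightarrow> (\<lambda>n. f n - g n) \<in> A"
  using anqie_add[OF _ anqie_scale[of g "-1"], of f] by simp

lemma anqie_power: "f \<in> A \<Longrightarrow> (\<lambda>n. f n ^ k) \<in> A"
  by (induction k) (auto simp: anqie_one anqie_mult)

lemma anqie_sum: "finite I \<Longrightarrow> (\<And>x. x \<in> I \<Longrightarrow> h x \<in> A) \<Longrightarrow> (\<lambda>n. \<Sum>x\<in>I. h x n) \<in> A"
  by (induction I rule: finite_induct) (auto simp: anqie_const anqie_add)

lemma anqie_funpow_shiftA: "f \<in> A \<Longrightarrow> (shiftA ^^ m) f \<in> A"
  by (induction m) (auto simp: anqie_shiftA)

text \<open>The partial sums of the Neumann series of \<open>1/\<beta> = (1/M) \<Sum>\<^sub>k (1 - \<beta>/M)\<^sup>k\<close> lie in \<open>A\<close>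
  and converge uniformly, because \<open>0 \<le> 1 - \<beta>/M \<le> 1 - \<eta>/M < 1\<close>.\<close>

lemma anqie_inverse_of_real:
  assumes \<beta>A: "(\<lambda>n. complex_of_real (\<beta> n)) \<in> A" and \<eta>: "0 < \<eta>" and \<beta>_ge: "\<And>n. \<eta> \<le> \<beta> n"
  shows "(\<lambda>n. complex_of_real (1 / \<beta> n)) \<in> A"
proof -
  obtain B where "\<And>n. cmod (complex_of_real (\<beta> n)) \<le> B"
    using anqie_subset_linf[OF \<beta>A] unfolding linf_iff by blast
  then have B: "\<beta> n \<le> B" for n by (metis abs_le_D1 norm_of_real)
  define M where "M = B + 1"
  have \<beta>_less: "\<beta> n < M" for n unfolding M_def using B[of n] by linarith
  have r: "0 \<le> 1 - \<eta> / M" "1 - \<eta> / M < 1"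
    using \<eta> \<beta>_ge[of 0] \<beta>_less[of 0] by (auto simp: field_simps)
  define c where "c N = (\<lambda>n. complex_of_real (1/M) *
    (\<Sum>k<N. ((\<lambda>n. 1) n - (\<lambda>n. complex_of_real (1/M) * complex_of_real (\<beta> n)) n) ^ k))" for N
  have cA: "c N \<in> A" for N
    unfolding c_def by (intro anqie_scale anqie_sum anqie_power anqie_diff anqie_one \<beta>A) simp
  have "cmod (c N n - complex_of_real (1 / \<beta> n)) \<le> (1 - \<eta> / M) ^ N / \<eta>" for N n
  proof -
    have "c N n = complex_of_real ((1/M) * (\<Sum>k<N. (1 - \<beta> n / M) ^ k))"
      unfolding c_def by simp
    then have "cmod (c N n - complex_of_real (1 / \<beta> n)) = \<bar>(1/M) * (\<Sum>k<N. (1 - \<beta> n / M) ^ k) - 1 / \<beta> n\<bar>"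
      by (metis norm_of_real of_real_diff)
    also have "\<dots> \<le> (1 - \<eta> / M) ^ N / \<eta>"
      by (rule geometric_inverse_approx[OF \<eta> \<beta>_ge \<beta>_less])
    finally show ?thesis .
  qed
  then have "(\<lambda>N. supnorm (\<lambda>n. c N n - complex_of_real (1 / \<beta> n))) \<longlonglongrightarrow> 0"
    by (rule supnorm_tendsto_zero)
       (use LIMSEQ_realpow_zero[OF r] in \<open>simp add: tendsto_divide_zero\<close>)
  moreover have "(\<lambda>n. complex_of_real (1 / \<beta> n)) \<in> linf"
  proof -
    have "cmod (complex_of_real (1 / \<beta> n)) \<le> 1 / \<eta>" for n
      using \<beta>_ge[of n] \<eta> by (simp only: norm_of_real) (simp add: frac_le)
    then show ?thesis unfolding linf_iff by blast
  qed
  ultimately show ?thesis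
    by (intro anqie_closed[where s=c, OF cA])
qed

lemma anqie_inverse:
  assumes aA: "a \<in> A" and \<eta>: "0 < \<eta>" and a_ge: "\<And>n. \<eta> \<le> cmod (a n)"
  shows "(\<lambda>n. inverse (a n)) \<in> A"
proof -
  have sq: "a n * cnj (a n) = complex_of_real ((cmod (a n))\<^sup>2)" for n
    by (metis complex_norm_square of_real_power)
  have "(\<lambda>n. a n * cnj (a n)) \<in> A"
    by (rule anqie_mult[OF aA anqie_cnj[OF aA]])
  then have "(\<lambda>n. complex_of_real ((cmod (a n))\<^sup>2)) \<in> A"
    by (simp only: sq)
  moreover have "\<eta>\<^sup>2 \<le> (cmod (a n))\<^sup>2" for n
    using \<eta> a_ge[of n] by (simp add: power_mono)
  ultimately have "(\<lambda>n. complex_of_real (1 / (cmod (a n))\<^sup>2)) \<in> A"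
    using \<eta> by (intro anqie_inverse_of_real[where \<eta>="\<eta>\<^sup>2"]) simp_all
  then have "(\<lambda>n. cnj (a n) * complex_of_real (1 / (cmod (a n))\<^sup>2)) \<in> A"
    by (rule anqie_mult[OF anqie_cnj[OF aA]])
  moreover have "cnj (a n) * complex_of_real (1 / (cmod (a n))\<^sup>2) = inverse (a n)" for n
    unfolding inverse_eq_divide complex_div_cnj[of 1 "a n"] by (simp add: divide_inverse)
  ultimately show ?thesis by simp
qed

end

lemma anqie_Inter:
  assumes anqie: "\<And>A. A \<in> S \<Longrightarrow> anqie A" and "S \<noteq> {}"
  shows "anqie (\<Inter>S)"
  unfolding anqie_def
proof (intro conjI allI ballI impI InterI)
  show "\<Inter>S \<subseteq> linf" using assms anqie_subset_linf by blast
  fix X assume X: "X \<in> S"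
  show "(\<lambda>n. 1) \<in> X" by (rule anqie_one[OF anqie[OF X]])
  show "(\<lambda>n. f n + g n) \<in> X" "(\<lambda>n. f n * g n) \<in> X" if "f \<in> \<Inter>S" "g \<in> \<Inter>S" for f g
    using that X by (auto intro: anqie_add anqie_mult anqie)
  show "(\<lambda>n. c * f n) \<in> X" "(\<lambda>n. cnj (f n)) \<in> X" "shiftA f \<in> X" if "f \<in> \<Inter>S" for f c
    using that X by (auto intro: anqie_scale anqie_cnj anqie_shiftA anqie)
  show "f \<in> X"
    if "(\<forall>k. s k \<in> \<Inter>S) \<and> f \<in> linf \<and> (\<lambda>k. supnorm (\<lambda>n. s k n - f n)) \<longlonglongrightarrow> 0" for s f
    using that X by (auto intro: anqie_closed[OF anqie[OF X]])
qed

lemma anqie_anqie_gen: "F \<subseteq> linf \<Longrightarrow> anqie (anqie_gen F)"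
  unfolding anqie_gen_def using anqie_linf by (intro anqie_Inter) auto

lemma anqie_gen_subset: "F \<subseteq> anqie_gen F"
  unfolding anqie_gen_def by auto

lemma anqie_gen_least: "anqie E \<Longrightarrow> F \<subseteq> E \<Longrightarrow> anqie_gen F \<subseteq> E"
  unfolding anqie_gen_def by auto

lemma supnorm_funpow_shiftA_diff_tendsto:
  assumes "\<And>k. s k \<in> linf" "a \<in> linf" and lim: "(\<lambda>k. supnorm (\<lambda>n. s k n - a n)) \<longlonglongrightarrow> 0"
  shows "(\<lambda>k. supnorm (\<lambda>n. (shiftA ^^ m) (s k) n - (shiftA ^^ m) a n)) \<longlonglongrightarrow> 0"
proof (rule Lim_null_comparison[OF _ lim])
  have diff: "(\<lambda>n. s k n - a n) \<in> linf" for k by (rule anqie_diff[OF anqie_linf assms(1,2)])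
  have "(\<lambda>n. (shiftA ^^ m) (s k) n - (shiftA ^^ m) a n) = (shiftA ^^ m) (\<lambda>n. s k n - a n)" for k
    by (simp add: funpow_shiftA)
  then show "\<forall>\<^sub>F k in sequentially.
      norm (supnorm (\<lambda>n. (shiftA ^^ m) (s k) n - (shiftA ^^ m) a n)) \<le> supnorm (\<lambda>n. s k n - a n)"
    using supnorm_funpow_shiftA_le[OF diff] supnorm_nonneg[OF anqie_funpow_shiftA[OF anqie_linf diff]] by simp
qed

section \<open>Characters\<close>

context
  fixes A \<rho> assumes char: "\<rho> \<in> chars A"
begin

lemma char_add: "f \<in> A \<Longrightarrow> g \<in> A \<Longrightarrow> \<rho> (\<lambda>n. f n + g n) = \<rho> f + \<rho> g"
  using char unfolding chars_def by blast

lemma char_mult: "f \<in> A \<Longrightarrow> g \<in> A \<Longrightarrow> \<rho> (\<lambda>n. f n * g n) = \<rho> f * \<rho> g"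
  using char unfolding chars_def by blast

lemma char_scale: "f \<in> A \<Longrightarrow> \<rho> (\<lambda>n. c * f n) = c * \<rho> f"
  using char unfolding chars_def by blast

lemma char_one: "\<rho> (\<lambda>n. 1) = 1"
  using char unfolding chars_def by blast

lemma char_outside: "f \<notin> A \<Longrightarrow> \<rho> f = 0"
  using char unfolding chars_def by blast

context
  assumes anqie: "anqie A"
begin

lemma char_const: "\<rho> (\<lambda>n. c) = c"
  using char_scale[OF anqie_one[OF anqie], of c] char_one by simp

lemma char_diff: "f \<in> A \<Longrightarrow> g \<in> A \<Longrightarrow> \<rho> (\<lambda>n. f n - g n) = \<rho> f - \<rho> g"
  using char_add[OF _ anqie_scale[OF anqie, of g "-1"], of f] char_scale[of g "-1"] by simp

lemma char_sum:
  "finite I \<Longrightarrow> (\<And>x. x \<in> I \<Longrightarrow> h x \<in> A) \<Longrightarrow> \<rho> (\<lambda>n. \<Sum>x\<in>I. h x n) = (\<Sum>x\<in>I. \<rho> (h x))"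
proof (induction I rule: finite_induct)
  case empty
  then show ?case using char_const[of 0] by simp
next
  case (insert x I)
  then show ?case
    using char_add[OF _ anqie_sum[OF anqie], of "h x" I h] by simp
qed

lemma char_nonzero:
  assumes aA: "a \<in> A" and \<eta>: "0 < \<eta>" and a_ge: "\<And>n. \<eta> \<le> cmod (a n)"
  shows "\<rho> a \<noteq> 0"
proof -
  have invA: "(\<lambda>n. inverse (a n)) \<in> A" by (rule anqie_inverse[OF anqie aA \<eta> a_ge])
  have "a n \<noteq> 0" for n using a_ge[of n] \<eta> by auto
  then have "\<rho> a * \<rho> (\<lambda>n. inverse (a n)) = 1"
    using char_mult[OF aA invA] char_one by simp
  then show ?thesis by auto
qed

text \<open>A value of \<open>\<rho>\<close> that is far from the range of \<open>a\<close> would make \<open>a - \<rho> a\<close> invertible in \<open>A\<close>.\<close>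

lemma char_in_closure_range:
  assumes aA: "a \<in> A" and \<eta>: "0 < \<eta>" and far: "\<And>n. \<eta> \<le> cmod (a n - z)"
  shows "\<rho> a \<noteq> z"
proof -
  have "\<rho> (\<lambda>n. a n - z) \<noteq> 0"
    by (rule char_nonzero[OF anqie_diff[OF anqie aA anqie_const[OF anqie]] \<eta> far])
  then show ?thesis using char_diff[OF aA anqie_const[OF anqie]] char_const by simp
qed

lemma norm_char_le_supnorm:
  assumes aA: "a \<in> A"
  shows "cmod (\<rho> a) \<le> supnorm a"
proof (rule ccontr)
  assume "\<not> ?thesis"
  moreover have "cmod (\<rho> a) - supnorm a \<le> cmod (a n - \<rho> a)" for n
    using norm_le_supnorm[OF anqie_subset_linf[OF anqie aA], of n] norm_triangle_ineq3[of "\<rho> a" "a n"]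
    by (simp add: norm_minus_commute)
  ultimately show False
    using char_in_closure_range[OF aA, of "cmod (\<rho> a) - supnorm a" "\<rho> a"] by simp
qed

lemma norm_char_diff_le:
  assumes "f \<in> A" "g \<in> A"
  shows "cmod (\<rho> f - \<rho> g) \<le> supnorm (\<lambda>n. f n - g n)"
  using norm_char_le_supnorm[OF anqie_diff[OF anqie assms]] char_diff[OF assms] by simp

lemma char_real:
  assumes aA: "a \<in> A" and real: "\<And>n. Im (a n) = 0"
  shows "Im (\<rho> a) = 0"
proof (rule ccontr)
  assume "Im (\<rho> a) \<noteq> 0"
  moreover have "\<bar>Im (\<rho> a)\<bar> \<le> cmod (a n - \<rho> a)" for n
    using abs_Im_le_cmod[of "a n - \<rho> a"] real[of n] by simp
  ultimately show False
    using char_in_closure_range[OF aA, of "\<bar>Im (\<rho> a)\<bar>" "\<rho> a"] by simp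
qed

lemma char_cnj:
  assumes aA: "a \<in> A"
  shows "\<rho> (\<lambda>n. cnj (a n)) = cnj (\<rho> a)"
proof -
  have caA: "(\<lambda>n. cnj (a n)) \<in> A" by (rule anqie_cnj[OF anqie aA])
  have "Im (\<rho> a + \<rho> (\<lambda>n. cnj (a n))) = 0"
    using char_real[OF anqie_add[OF anqie aA caA]] char_add[OF aA caA] by simp
  moreover have "Im (\<i> * (\<rho> a - \<rho> (\<lambda>n. cnj (a n)))) = 0"
    using char_real[OF anqie_scale[OF anqie anqie_diff[OF anqie aA caA], where c=\<i>]]
      char_scale[OF anqie_diff[OF anqie aA caA], where c=\<i>] char_diff[OF aA caA]
    by simp
  ultimately show ?thesis by (simp add: complex_eq_iff)
qed

text \<open>If no single time \<open>k\<close> brought all \<open>h x k\<close> close to \<open>\<rho> (h x)\<close>, then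
  \<open>\<Sum>\<^sub>x |h x - \<rho> (h x)|\<^sup>2\<close> would be bounded below, yet \<open>\<rho>\<close> vanishes on it.\<close>

lemma char_approx_by_eval:
  assumes fin: "finite I" and hA: "\<And>x. x \<in> I \<Longrightarrow> h x \<in> A" and \<eta>: "0 < \<eta>"
  shows "\<exists>k. \<forall>x\<in>I. cmod (h x k - \<rho> (h x)) < \<eta>"
proof (rule ccontr)
  assume "\<not> ?thesis"
  then have far: "\<exists>x\<in>I. \<eta> \<le> cmod (h x k - \<rho> (h x))" for k by (auto simp: not_less)
  define e where "e x = (\<lambda>n. h x n - \<rho> (h x))" for x
  have eA: "e x \<in> A" if "x \<in> I" for x
    unfolding e_def by (rule anqie_diff[OF anqie hA[OF that] anqie_const[OF anqie]])
  have \<rho>e: "\<rho> (e x) = 0" if "x \<in> I" for x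
    unfolding e_def using char_diff[OF hA[OF that] anqie_const[OF anqie]] char_const by simp
  define p where "p x = (\<lambda>n. e x n * cnj (e x n))" for x
  have pA: "p x \<in> A" if "x \<in> I" for x
    unfolding p_def by (intro anqie_mult[OF anqie] anqie_cnj[OF anqie] eA that)
  have p_eq: "p x n = complex_of_real ((cmod (e x n))\<^sup>2)" for x n
    unfolding p_def by (metis complex_norm_square of_real_power)
  have low: "\<eta>\<^sup>2 \<le> cmod (\<Sum>x\<in>I. p x n)" for n
  proof -
    obtain x where x: "x \<in> I" "\<eta> \<le> cmod (e x n)" using far[of n] unfolding e_def by blast
    have "\<eta>\<^sup>2 \<le> (cmod (e x n))\<^sup>2" using x(2) \<eta> by (simp add: power_mono)
    also have "\<dots> \<le> (\<Sum>y\<in>I. (cmod (e y n))\<^sup>2)" using x(1) fin by (intro member_le_sum) auto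
    also have "\<dots> = cmod (\<Sum>x\<in>I. p x n)"
      unfolding p_eq of_real_sum[symmetric] norm_of_real by (simp add: sum_nonneg)
    finally show ?thesis .
  qed
  have "\<rho> (\<lambda>n. \<Sum>x\<in>I. p x n) \<noteq> 0"
    by (rule char_nonzero[OF anqie_sum[OF anqie fin pA] zero_less_power[OF \<eta>] low])
  moreover have "\<rho> (p x) = 0" if "x \<in> I" for x
    unfolding p_def using char_mult[OF eA[OF that] anqie_cnj[OF anqie eA[OF that]]] \<rho>e[OF that] by simp
  ultimately show False using char_sum[OF fin pA] by simp
qed

end

end

definition eval_char :: "arith set \<Rightarrow> nat \<Rightarrow> arith \<Rightarrow> complex" where
  "eval_char A k = (\<lambda>a. if a \<in> A then a k else 0)"

lemma eval_char_in_chars: "anqie A \<Longrightarrow> eval_char A k \<in> chars A"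
  unfolding chars_def eval_char_def by (auto simp: anqie_add anqie_mult anqie_scale anqie_one)

lemma dual_shift_in_chars:
  assumes anqie: "anqie A" and char: "\<rho> \<in> chars A"
  shows "dual_shift A \<rho> \<in> chars A"
proof -
  have shiftA_hom: "shiftA (\<lambda>n. f n + g n) = (\<lambda>n. shiftA f n + shiftA g n)"
    "shiftA (\<lambda>n. f n * g n) = (\<lambda>n. shiftA f n * shiftA g n)"
    "shiftA (\<lambda>n. c) = (\<lambda>n. c)" for f g c
    by (simp_all add: shiftA_def)
  show ?thesis
    unfolding chars_def dual_shift_def using char anqie
    by (auto simp: shiftA_hom anqie_add anqie_mult anqie_scale anqie_one anqie_shiftA
        char_add char_mult char_scale char_one)
qed

lemma funpow_dual_shift_in_chars: "anqie A \<Longrightarrow> \<rho> \<in> chars A \<Longrightarrow> (dual_shift A ^^ t) \<rho> \<in> chars A"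
  by (induction t) (auto simp: dual_shift_in_chars)

lemma funpow_dual_shift_apply:
  assumes anqie: "anqie A" and "a \<in> A"
  shows "(dual_shift A ^^ t) \<rho> a = \<rho> ((shiftA ^^ t) a)"
  using assms(2)
proof (induction t arbitrary: a)
  case (Suc t)
  have "(dual_shift A ^^ Suc t) \<rho> a = (dual_shift A ^^ t) \<rho> (shiftA a)"
    using Suc.prems by (simp add: dual_shift_def)
  also have "\<dots> = \<rho> ((shiftA ^^ Suc t) a)"
    using Suc.IH[OF anqie_shiftA[OF anqie Suc.prems]] by (simp add: funpow_Suc_right del: funpow.simps)
  finally show ?case .
qed simp

lemma funpow_dual_shift_eval_char:
  assumes "anqie A" "a \<in> A"
  shows "(dual_shift A ^^ t) (eval_char A k) a = a (k + t)"
  using funpow_dual_shift_apply[OF assms] anqie_funpow_shiftA[OF assms]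
  by (simp add: eval_char_def funpow_shiftA)

lemma char_tendsto:
  assumes "anqie A" "\<tau> \<in> chars A" "\<And>k. s k \<in> A" "a \<in> A"
    and "(\<lambda>k. supnorm (\<lambda>n. s k n - a n)) \<longlonglongrightarrow> 0"
  shows "(\<lambda>k. \<tau> (s k)) \<longlonglongrightarrow> \<tau> a"
proof -
  have "(\<lambda>k. \<tau> (s k) - \<tau> a) \<longlonglongrightarrow> 0"
    using norm_char_diff_le[OF assms(2,1,3,4)] by (intro Lim_null_comparison[OF _ assms(5)]) auto
  then show ?thesis by (simp add: LIM_zero_iff)
qed

lemma anqie_char_equalizer:
  assumes anqie: "anqie A" and \<rho>: "\<rho> \<in> chars A" and \<sigma>: "\<sigma> \<in> chars A"
  shows "anqie {a \<in> A. \<forall>m. \<rho> ((shiftA ^^ m) a) = \<sigma> ((shiftA ^^ m) a)}" (is "anqie ?E")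
proof -
  have shift_hom: "(shiftA ^^ m) (\<lambda>n. a n + b n) = (\<lambda>n. (shiftA ^^ m) a n + (shiftA ^^ m) b n)"
    "(shiftA ^^ m) (\<lambda>n. a n * b n) = (\<lambda>n. (shiftA ^^ m) a n * (shiftA ^^ m) b n)"
    "(shiftA ^^ m) (\<lambda>n. cnj (a n)) = (\<lambda>n. cnj ((shiftA ^^ m) a n))"
    "(shiftA ^^ m) (\<lambda>n. c) = (\<lambda>n. c)"
    "(shiftA ^^ m) (shiftA a) = (shiftA ^^ Suc m) a" for m a b c
    by (simp_all add: funpow_shiftA funpow_Suc_right del: funpow.simps)
  have closed: "a \<in> ?E"
    if s: "\<And>k. s k \<in> ?E" and a: "a \<in> linf" and lim: "(\<lambda>k. supnorm (\<lambda>n. s k n - a n)) \<longlonglongrightarrow> 0"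
    for s a
  proof -
    have sA: "s k \<in> A" for k using s by blast
    have aA: "a \<in> A" by (rule anqie_closed[OF anqie sA a lim])
    have "\<rho> ((shiftA ^^ m) a) = \<sigma> ((shiftA ^^ m) a)" for m
    proof -
      have "(\<lambda>k. \<tau> ((shiftA ^^ m) (s k))) \<longlonglongrightarrow> \<tau> ((shiftA ^^ m) a)" if "\<tau> \<in> chars A" for \<tau>
        using char_tendsto[OF anqie that, of "\<lambda>k. (shiftA ^^ m) (s k)" "(shiftA ^^ m) a"]
          anqie_funpow_shiftA[OF anqie sA] anqie_funpow_shiftA[OF anqie aA]
          supnorm_funpow_shiftA_diff_tendsto[OF anqie_subset_linf[OF anqie sA] a lim] by blast
      moreover have "(\<lambda>k. \<rho> ((shiftA ^^ m) (s k))) = (\<lambda>k. \<sigma> ((shiftA ^^ m) (s k)))" using s by blast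
      ultimately show ?thesis using \<rho> \<sigma> LIMSEQ_unique by metis
    qed
    then show ?thesis using aA by blast
  qed
  show ?thesis
    unfolding anqie_def
  proof (intro conjI ballI allI impI)
    show "?E \<subseteq> linf" using anqie_subset_linf[OF anqie] by blast
    show "(\<lambda>n. 1) \<in> ?E"
      using anqie_one[OF anqie] char_one[OF \<rho>] char_one[OF \<sigma>] by (simp add: shift_hom del: funpow.simps)
    show "(\<lambda>n. a n + b n) \<in> ?E" "(\<lambda>n. a n * b n) \<in> ?E" if "a \<in> ?E" "b \<in> ?E" for a b
      using that anqie_add[OF anqie] anqie_mult[OF anqie] anqie_funpow_shiftA[OF anqie]
        char_add[OF \<rho>] char_add[OF \<sigma>] char_mult[OF \<rho>] char_mult[OF \<sigma>]
      by (simp_all add: shift_hom del: funpow.simps)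
    show "(\<lambda>n. c * a n) \<in> ?E" "(\<lambda>n. cnj (a n)) \<in> ?E" "shiftA a \<in> ?E" if "a \<in> ?E" for a c
      using that anqie_scale[OF anqie] anqie_cnj[OF anqie] anqie_shiftA[OF anqie] anqie_funpow_shiftA[OF anqie]
        char_scale[OF \<rho>] char_scale[OF \<sigma>] char_cnj[OF \<rho> anqie] char_cnj[OF \<sigma> anqie]
      by (simp_all add: shift_hom del: funpow.simps)
  qed (use closed in blast)
qed

lemma chars_anqie_gen_eqI:
  assumes f: "\<And>i. f i \<in> linf"
    and \<rho>: "\<rho> \<in> chars (anqie_gen (range f))" and \<sigma>: "\<sigma> \<in> chars (anqie_gen (range f))"
    and eq: "\<And>i m. \<rho> ((shiftA ^^ m) (f i)) = \<sigma> ((shiftA ^^ m) (f i))"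
  shows "\<rho> = \<sigma>"
proof
  fix a
  define A where "A = anqie_gen (range f)"
  have anqie: "anqie A" unfolding A_def using f by (intro anqie_anqie_gen) auto
  have "range f \<subseteq> {a \<in> A. \<forall>m. \<rho> ((shiftA ^^ m) a) = \<sigma> ((shiftA ^^ m) a)}"
    using eq anqie_gen_subset[of "range f"] unfolding A_def by blast
  then have sub: "A \<subseteq> {a \<in> A. \<forall>m. \<rho> ((shiftA ^^ m) a) = \<sigma> ((shiftA ^^ m) a)}"
    using anqie_gen_least[OF anqie_char_equalizer[OF anqie \<rho>[folded A_def] \<sigma>[folded A_def]]]
    by (simp only: A_def)
  show "\<rho> a = \<sigma> a"
  proof (cases "a \<in> A")
    case True
    then have "\<forall>m. \<rho> ((shiftA ^^ m) a) = \<sigma> ((shiftA ^^ m) a)" using sub by blast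
    then show ?thesis by (metis funpow_0)
  next
    case False
    then show ?thesis using char_outside[OF \<rho>] char_outside[OF \<sigma>] unfolding A_def by simp
  qed
qed

lemma closed_chars: "closed (chars A)"
proof -
  have coord: "continuous_on UNIV (\<lambda>\<rho>::arith \<Rightarrow> complex. \<rho> a)" for a
    by (rule continuous_on_product_coordinates)
  have cond: "(C \<Longrightarrow> closed {x. P x}) \<Longrightarrow> closed {x. C \<longrightarrow> P x}" for C P
    by (cases C) auto
  have "chars A =
     {\<rho>. \<forall>f g. f \<in> A \<and> g \<in> A \<longrightarrow> \<rho> (\<lambda>n. f n + g n) = \<rho> f + \<rho> g} \<inter>
     {\<rho>. \<forall>f g. f \<in> A \<and> g \<in> A \<longrightarrow> \<rho> (\<lambda>n. f n * g n) = \<rho> f * \<rho> g} \<inter>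
     {\<rho>. \<forall>c f. f \<in> A \<longrightarrow> \<rho> (\<lambda>n. c * f n) = c * \<rho> f} \<inter>
     {\<rho>. \<rho> (\<lambda>n. 1) = 1} \<inter> {\<rho>. \<forall>f. f \<notin> A \<longrightarrow> \<rho> f = 0}"
    unfolding chars_def by auto
  also have "closed \<dots>"
    by (intro closed_Int closed_Collect_all cond closed_Collect_eq continuous_intros coord)
  finally show ?thesis .
qed

text \<open>The characters lie in the compact product of the discs of radius \<open>supnorm a\<close>.\<close>

lemma compact_chars:
  assumes anqie: "anqie A"
  shows "compact (chars A)"
proof -
  define P where "P = PiE UNIV (\<lambda>a. cball (0::complex) (if a \<in> A then supnorm a else 0))"
  have "compactin (product_topology (\<lambda>_. euclidean) UNIV) P"
    unfolding P_def compactin_PiE by auto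
  then have "compact P" by (simp add: euclidean_product_topology)
  moreover have "chars A \<subseteq> P"
    using norm_char_le_supnorm[OF _ anqie] char_outside unfolding P_def by fastforce
  ultimately show ?thesis
    using compact_Int_closed[OF _ closed_chars] by (metis inf.absorb_iff2)
qed

section \<open>Coordinate boxes\<close>

definition coord_box :: "('c \<Rightarrow> 'b) \<Rightarrow> 'c set \<Rightarrow> ('c \<Rightarrow> 'a) \<Rightarrow> real \<Rightarrow> ('b \<Rightarrow> 'a::real_normed_vector) set" where
  "coord_box \<phi> J z r = {\<tau>. \<forall>c\<in>J. norm (\<tau> (\<phi> c) - z c) < r}"

lemma open_coord_box:
  fixes z :: "'c \<Rightarrow> 'a::real_normed_vector" and \<phi> :: "'c \<Rightarrow> 'b"
  assumes "finite J"
  shows "open (coord_box \<phi> J z r)"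
proof -
  note \<open>finite J\<close>
  moreover have "open {\<tau>::'b \<Rightarrow> 'a. norm (\<tau> (\<phi> c) - z c) < r}" for c
    by (intro open_Collect_less continuous_intros continuous_on_product_coordinates)
  ultimately have "open (\<Inter>c\<in>J. {\<tau>::'b \<Rightarrow> 'a. norm (\<tau> (\<phi> c) - z c) < r})"
    by (cases "J = {}") (auto intro: open_INT)
  moreover have "coord_box \<phi> J z r = (\<Inter>c\<in>J. {\<tau>. norm (\<tau> (\<phi> c) - z c) < r})"
    unfolding coord_box_def by auto
  ultimately show ?thesis by simp
qed

lemma coord_box_mono: "J' \<subseteq> J \<Longrightarrow> r \<le> r' \<Longrightarrow> coord_box \<phi> J z r \<subseteq> coord_box \<phi> J' z r'"
  unfolding coord_box_def by fastforce

lemma coord_box_triangle: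
  "\<rho> \<in> coord_box \<phi> J z r \<Longrightarrow> coord_box \<phi> J (\<lambda>c. \<rho> (\<phi> c)) s \<subseteq> coord_box \<phi> J z (r + s)"
  unfolding coord_box_def using norm_triangle_lt norm_diff_triangle_less by (fastforce simp: add.commute)

lemma coord_box_subset_openin:
  fixes X :: "('b \<Rightarrow> 'a::real_normed_vector) set" and \<phi> :: "'c \<Rightarrow> 'b"
  assumes X: "compact X"
    and inj: "\<And>\<rho> \<sigma>. \<rho> \<in> X \<Longrightarrow> \<sigma> \<in> X \<Longrightarrow> (\<And>c. \<rho> (\<phi> c) = \<sigma> (\<phi> c)) \<Longrightarrow> \<rho> = \<sigma>"
    and V: "openin (top_of_set X) V" and \<rho>: "\<rho> \<in> V"
  obtains J \<eta> where "finite J" "0 < \<eta>" "X \<inter> coord_box \<phi> J (\<lambda>c. \<rho> (\<phi> c)) \<eta> \<subseteq> V"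
proof -
  obtain W where W: "open W" "V = W \<inter> X" using V by (auto simp: openin_open)
  define K where "K = X \<inter> - W"
  have K: "compact K" unfolding K_def using X W(1) by (intro compact_Int_closed) auto
  have "\<exists>c. \<sigma> (\<phi> c) \<noteq> \<rho> (\<phi> c)" if "\<sigma> \<in> K" for \<sigma>
    using that inj[of \<sigma> \<rho>] \<rho> W unfolding K_def by auto
  then obtain cc where cc: "\<And>\<sigma>. \<sigma> \<in> K \<Longrightarrow> \<sigma> (\<phi> (cc \<sigma>)) \<noteq> \<rho> (\<phi> (cc \<sigma>))" by metis
  define d where "d \<sigma> = norm (\<sigma> (\<phi> (cc \<sigma>)) - \<rho> (\<phi> (cc \<sigma>)))" for \<sigma>
  define Far where "Far \<sigma> = {\<tau>. d \<sigma> / 2 < norm (\<tau> (\<phi> (cc \<sigma>)) - \<rho> (\<phi> (cc \<sigma>)))}" for \<sigma>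
  have "open (Far \<sigma>)" for \<sigma>
    unfolding Far_def by (intro open_Collect_less continuous_intros continuous_on_product_coordinates)
  moreover have "K \<subseteq> (\<Union>\<sigma>\<in>K. Far \<sigma>)"
    using cc unfolding Far_def d_def by fastforce
  ultimately obtain T where T: "T \<subseteq> K" "finite T" "K \<subseteq> (\<Union>\<sigma>\<in>T. Far \<sigma>)"
    using compactE_image[OF K] by metis
  define \<eta> where "\<eta> = Min (insert 1 ((\<lambda>\<sigma>. d \<sigma> / 2) ` T))"
  have "0 < \<eta>" unfolding \<eta>_def d_def using T cc by (subst Min_gr_iff) auto
  moreover have "\<eta> \<le> d \<sigma> / 2" if "\<sigma> \<in> T" for \<sigma> unfolding \<eta>_def using T(2) that by (intro Min_le) auto
  then have "X \<inter> coord_box \<phi> (cc ` T) (\<lambda>c. \<rho> (\<phi> c)) \<eta> \<subseteq> V"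
    using T(3) W(2) unfolding K_def Far_def coord_box_def by fastforce
  ultimately show ?thesis using that T(2) by blast
qed

lemma coord_box_Lebesgue:
  fixes X :: "('b \<Rightarrow> 'a::real_normed_vector) set" and \<phi> :: "'c \<Rightarrow> 'b"
  assumes X: "compact X"
    and inj: "\<And>\<rho> \<sigma>. \<rho> \<in> X \<Longrightarrow> \<sigma> \<in> X \<Longrightarrow> (\<And>c. \<rho> (\<phi> c) = \<sigma> (\<phi> c)) \<Longrightarrow> \<rho> = \<sigma>"
    and open_cover: "\<And>V. V \<in> \<U> \<Longrightarrow> openin (top_of_set X) V" and cover: "X \<subseteq> \<Union>\<U>"
  obtains J \<eta> where "finite J" "0 < \<eta>"
    "\<forall>\<rho>\<in>X. \<exists>V\<in>\<U>. X \<inter> coord_box \<phi> J (\<lambda>c. \<rho> (\<phi> c)) \<eta> \<subseteq> V"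
proof -
  have "\<exists>V J \<eta>. V \<in> \<U> \<and> finite J \<and> 0 < \<eta> \<and> X \<inter> coord_box \<phi> J (\<lambda>c. \<rho> (\<phi> c)) \<eta> \<subseteq> V"
    if \<rho>: "\<rho> \<in> X" for \<rho>
  proof -
    obtain V where V: "V \<in> \<U>" "\<rho> \<in> V" using cover \<rho> by blast
    obtain J \<eta> where "finite J" "0 < \<eta>" "X \<inter> coord_box \<phi> J (\<lambda>c. \<rho> (\<phi> c)) \<eta> \<subseteq> V"
      by (rule coord_box_subset_openin[OF X inj open_cover[OF V(1)] V(2)])
    then show ?thesis using V(1) by blast
  qed
  then obtain VV JJ \<eta>\<eta> where VJ: "\<And>\<rho>. \<rho> \<in> X \<Longrightarrow> VV \<rho> \<in> \<U> \<and> finite (JJ \<rho>) \<and> 0 < \<eta>\<eta> \<rho> \<and>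
      X \<inter> coord_box \<phi> (JJ \<rho>) (\<lambda>c. \<rho> (\<phi> c)) (\<eta>\<eta> \<rho>) \<subseteq> VV \<rho>"
    by metis
  define B where "B \<rho> = coord_box \<phi> (JJ \<rho>) (\<lambda>c. \<rho> (\<phi> c)) (\<eta>\<eta> \<rho> / 2)" for \<rho>
  have "open (B \<rho>)" if "\<rho> \<in> X" for \<rho>
    unfolding B_def using VJ[OF that] by (intro open_coord_box) auto
  moreover have "X \<subseteq> (\<Union>\<rho>\<in>X. B \<rho>)"
    using VJ unfolding B_def coord_box_def by fastforce
  ultimately obtain T where T: "T \<subseteq> X" "finite T" "X \<subseteq> (\<Union>\<rho>\<in>T. B \<rho>)"
    using compactE_image[OF X] by metis
  define J where "J = (\<Union>\<rho>\<in>T. JJ \<rho>)"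
  define \<eta> where "\<eta> = Min (insert 1 ((\<lambda>\<rho>. \<eta>\<eta> \<rho> / 2) ` T))"
  have "finite J" unfolding J_def using T VJ by auto
  moreover have "0 < \<eta>" unfolding \<eta>_def using T VJ by (subst Min_gr_iff) auto
  moreover have "\<forall>\<rho>\<in>X. \<exists>V\<in>\<U>. X \<inter> coord_box \<phi> J (\<lambda>c. \<rho> (\<phi> c)) \<eta> \<subseteq> V"
  proof
    fix \<rho> assume \<rho>: "\<rho> \<in> X"
    obtain \<rho>0 where \<rho>0: "\<rho>0 \<in> T" "\<rho> \<in> B \<rho>0" using T \<rho> by auto
    have \<eta>_le: "\<eta> \<le> \<eta>\<eta> \<rho>0 / 2" unfolding \<eta>_def using T(2) \<rho>0(1) by (intro Min_le) auto
    have "coord_box \<phi> J (\<lambda>c. \<rho> (\<phi> c)) \<eta> \<subseteq> coord_box \<phi> (JJ \<rho>0) (\<lambda>c. \<rho> (\<phi> c)) (\<eta>\<eta> \<rho>0 / 2)"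
      using \<rho>0(1) \<eta>_le unfolding J_def by (intro coord_box_mono) auto
    also have "\<dots> \<subseteq> coord_box \<phi> (JJ \<rho>0) (\<lambda>c. \<rho>0 (\<phi> c)) (\<eta>\<eta> \<rho>0 / 2 + \<eta>\<eta> \<rho>0 / 2)"
      using \<rho>0(2) unfolding B_def by (rule coord_box_triangle)
    finally have "X \<inter> coord_box \<phi> J (\<lambda>c. \<rho> (\<phi> c)) \<eta> \<subseteq> X \<inter> coord_box \<phi> (JJ \<rho>0) (\<lambda>c. \<rho>0 (\<phi> c)) (\<eta>\<eta> \<rho>0)"
      by auto
    then show "\<exists>V\<in>\<U>. X \<inter> coord_box \<phi> J (\<lambda>c. \<rho> (\<phi> c)) \<eta> \<subseteq> V" using VJ \<rho>0 T(1) by blast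
  qed
  ultimately show ?thesis using that by blast
qed

section \<open>Separated sets of times\<close>

definition separated :: "('k \<Rightarrow> 'x \<Rightarrow> complex) \<Rightarrow> 'x set \<Rightarrow> real \<Rightarrow> 'k set \<Rightarrow> bool" where
  "separated w I r S \<longleftrightarrow> (\<forall>k\<in>S. \<forall>k'\<in>S. k \<noteq> k' \<longrightarrow> (\<exists>x\<in>I. r \<le> cmod (w k x - w k' x)))"

definition grid_cell :: "real \<Rightarrow> complex \<Rightarrow> int \<times> int" where
  "grid_cell q z = (\<lfloor>Re z / q\<rfloor>, \<lfloor>Im z / q\<rfloor>)"

lemma grid_cell_eq_imp_dist_less:
  assumes q: "0 < q" and eq: "grid_cell q z = grid_cell q z'"
  shows "cmod (z - z') < 2 * q"
proof -
  have floor_eq: "\<bar>x - y\<bar> < 1" if "\<lfloor>x\<rfloor> = \<lfloor>y\<rfloor>" for x y :: real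
    using that floor_correct[of x] floor_correct[of y] by linarith
  have "\<bar>Re z / q - Re z' / q\<bar> < 1" "\<bar>Im z / q - Im z' / q\<bar> < 1"
    using eq by (auto simp: grid_cell_def floor_eq)
  then have "\<bar>Re (z - z')\<bar> < q" "\<bar>Im (z - z')\<bar> < q"
    using q by (simp_all add: diff_divide_distrib[symmetric] abs_divide divide_less_eq)
  then show ?thesis using cmod_le[of "z - z'"] by linarith
qed

lemma grid_cell_bounded:
  assumes q: "0 < q" and z: "cmod z \<le> R"
  shows "grid_cell q z \<in> {-\<lceil>R/q\<rceil>..\<lceil>R/q\<rceil>} \<times> {-\<lceil>R/q\<rceil>..\<lceil>R/q\<rceil>}"
proof -
  have "\<lfloor>t / q\<rfloor> \<in> {-\<lceil>R/q\<rceil>..\<lceil>R/q\<rceil>}" if t: "\<bar>t\<bar> \<le> R" for t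
  proof -
    have "-R/q \<le> t/q" "t/q \<le> R/q"
      using divide_right_mono[of "-R" t q] divide_right_mono[of t R q] t q by auto
    then have "\<lfloor>-R/q\<rfloor> \<le> \<lfloor>t/q\<rfloor>" "\<lfloor>t/q\<rfloor> \<le> \<lfloor>R/q\<rfloor>" by (simp_all add: floor_mono)
    then show ?thesis using floor_le_ceiling[of "R/q"] by (simp add: floor_minus del: floor_le_ceiling)
  qed
  then show ?thesis unfolding grid_cell_def
    using abs_Re_le_cmod[of z] abs_Im_le_cmod[of z] z by auto
qed

text \<open>Two separated indices never share the \<open>r/2\<close>-grid cells of all their coordinates.\<close>

lemma separated_card_bounded:
  assumes I: "finite I" and r: "0 < r" and R: "\<And>k x. x \<in> I \<Longrightarrow> cmod (w k x) \<le> R"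
  obtains N where "\<And>S. separated w I r S \<Longrightarrow> finite S \<and> card S \<le> N"
proof -
  define M where "M = \<lceil>R / (r/2)\<rceil>"
  define G where "G = {-M..M} \<times> {-M..M}"
  define cells where "cells k = restrict (\<lambda>x. grid_cell (r/2) (w k x)) I" for k
  have cells_in: "cells k \<in> PiE I (\<lambda>_. G)" for k
    unfolding cells_def G_def M_def using grid_cell_bounded[of "r/2"] r R by auto
  have fin: "finite (PiE I (\<lambda>_. G))" unfolding G_def using I by (intro finite_PiE) auto
  have "finite S \<and> card S \<le> card (PiE I (\<lambda>_. G))" if S: "separated w I r S" for S
  proof -
    have "inj_on cells S"
    proof (rule inj_onI, rule ccontr)
      fix k k' assume k: "k \<in> S" "k' \<in> S" "cells k = cells k'" "k \<noteq> k'"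
      then obtain x where x: "x \<in> I" "r \<le> cmod (w k x - w k' x)" using S unfolding separated_def by blast
      then have "grid_cell (r/2) (w k x) = grid_cell (r/2) (w k' x)"
        using fun_cong[OF k(3), of x] unfolding cells_def by simp
      then show False using grid_cell_eq_imp_dist_less[of "r/2"] r x(2) by fastforce
    qed
    moreover have "cells ` S \<subseteq> PiE I (\<lambda>_. G)" using cells_in by auto
    ultimately show ?thesis using fin card_inj_on_le finite_imageD finite_subset by metis
  qed
  then show ?thesis using that by blast
qed

lemma maximal_separated_exists:
  assumes I: "finite I" and r: "0 < r" and R: "\<And>k x. x \<in> I \<Longrightarrow> cmod (w k x) \<le> R"
  obtains S where "finite S" "separated w I r S" "\<forall>k. \<exists>s\<in>S. \<forall>x\<in>I. cmod (w k x - w s x) < r"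
proof -
  obtain N where N: "\<And>S. separated w I r S \<Longrightarrow> finite S \<and> card S \<le> N"
    using separated_card_bounded[where w=w, OF I r R] by blast
  define C where "C = card ` {S. separated w I r S}"
  have "C \<subseteq> {..N}" unfolding C_def using N by auto
  then have "finite C" by (rule finite_subset) simp
  moreover have "separated w I r {}" unfolding separated_def by simp
  then have "C \<noteq> {}" unfolding C_def by blast
  ultimately have "Max C \<in> C" by (rule Max_in)
  then obtain S where S: "separated w I r S" "card S = Max C" unfolding C_def by auto
  have "\<exists>s\<in>S. \<forall>x\<in>I. cmod (w k x - w s x) < r" for k
  proof (rule ccontr)
    assume "\<not> ?thesis"
    then have far: "\<forall>s\<in>S. \<exists>x\<in>I. r \<le> cmod (w k x - w s x)" by (auto simp: not_less)
    then have "k \<notin> S" using r by force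
    have "separated w I r (insert k S)"
      using S(1) far unfolding separated_def by (metis insert_iff norm_minus_commute)
    then have "card (insert k S) \<le> Max C" unfolding C_def using \<open>finite C\<close>[unfolded C_def] by simp
    then show False using S(2) N[OF S(1)] \<open>k \<notin> S\<close> by simp
  qed
  then show ?thesis using that N[OF S(1)] S(1) by blast
qed

section \<open>Subadditive sequences\<close>

lemma subadditive_mult_add:
  fixes a :: "nat \<Rightarrow> real"
  assumes sub: "\<And>m n. a (m + n) \<le> a m + a n"
  shows "a (q * m + r) \<le> real q * a m + a r"
proof (induction q)
  case (Suc q)
  have "a (Suc q * m + r) \<le> a m + a (q * m + r)" using sub[of m "q * m + r"] by (simp add: add.assoc)
  with Suc show ?case by (simp add: algebra_simps)
qed simp

lemma subadditive_div_le:
  fixes a :: "nat \<Rightarrow> real"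
  assumes sub: "\<And>m n. a (m + n) \<le> a m + a n" and nonneg: "\<And>n. 0 \<le> a n"
    and m: "0 < m" and n: "0 < n" and C: "\<And>r. r < m \<Longrightarrow> a r \<le> C"
  shows "a n / real n \<le> a m / real m + C / real n"
proof -
  have "a n \<le> real (n div m) * a m + a (n mod m)"
    using subadditive_mult_add[OF sub, of "n div m" m "n mod m"] by simp
  also have "\<dots> \<le> real n / real m * a m + C"
    using C[of "n mod m"] m nonneg[of m] of_nat_div_le_of_nat[of n m]
    by (intro add_mono mult_right_mono) auto
  finally show ?thesis using n by (simp add: field_simps)
qed

lemma subadditive_convergent:
  fixes a :: "nat \<Rightarrow> real"
  assumes sub: "\<And>m n. a (m + n) \<le> a m + a n" and nonneg: "\<And>n. 0 \<le> a n"
  shows "convergent (\<lambda>n. a n / real n)"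
proof -
  define L where "L = Inf ((\<lambda>n. a n / real n) ` {1..})"
  have bdd: "bdd_below ((\<lambda>n. a n / real n) ` {1..})"
    using nonneg by (intro bdd_belowI[of _ 0]) auto
  have L_le: "L \<le> a n / real n" if "1 \<le> n" for n
    unfolding L_def using bdd that by (intro cInf_lower) auto
  have "(\<lambda>n. a n / real n) \<longlonglongrightarrow> L"
  proof (rule LIMSEQ_I)
    fix e :: real assume e: "0 < e"
    have "\<exists>m\<ge>1. a m / real m < L + e / 2"
    proof (rule ccontr)
      assume "\<not> ?thesis"
      then have "L + e / 2 \<le> L" unfolding L_def by (intro cInf_greatest) (auto simp: not_less)
      then show False using e by simp
    qed
    then obtain m where m: "1 \<le> m" "a m / real m < L + e / 2" by blast
    define C where "C = Max (a ` {..<m})"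
    have C: "a r \<le> C" if "r < m" for r unfolding C_def using that by (intro Max_ge) auto
    obtain N0 where N0: "2 * C / e < real N0" using reals_Archimedean2 by blast
    have "norm (a n / real n - L) < e" if n: "max m N0 \<le> n" for n
    proof -
      have n_pos: "0 < real n" using n m(1) by simp
      have "a n / real n \<le> a m / real m + C / real n"
        using n_pos m(1) by (intro subadditive_div_le[OF sub nonneg _ _ C]) auto
      moreover have "C / real n < e / 2"
      proof -
        have "2 * C / e < real n" using N0 n by linarith
        then show ?thesis using e n_pos by (simp add: field_simps)
      qed
      ultimately show ?thesis using m(2) L_le[of n] n m(1) unfolding real_norm_def abs_less_iff by linarith
    qed
    then show "\<exists>no. \<forall>n\<ge>no. norm (a n / real n - L) < e" by blast
  qed
  then show ?thesis by (rule convergentI)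
qed

section \<open>Cover numbers of joins\<close>

definition has_finite_subcover :: "'a topology \<Rightarrow> 'a set set \<Rightarrow> bool" where
  "has_finite_subcover X \<U> \<longleftrightarrow> (\<exists>\<V>. \<V> \<subseteq> \<U> \<and> finite \<V> \<and> \<Union>\<V> = topspace X)"

lemma cover_num_le: "\<V> \<subseteq> \<U> \<Longrightarrow> finite \<V> \<Longrightarrow> \<Union>\<V> = topspace X \<Longrightarrow> cover_num X \<U> \<le> card \<V>"
  unfolding cover_num_def by (intro cInf_lower) auto

lemma cover_num_attained:
  assumes "has_finite_subcover X \<U>"
  obtains \<V> where "\<V> \<subseteq> \<U>" "finite \<V>" "\<Union>\<V> = topspace X" "card \<V> = cover_num X \<U>"
proof -
  have "cover_num X \<U> \<in> {card \<V> | \<V>. \<V> \<subseteq> \<U> \<and> finite \<V> \<and> \<Union>\<V> = topspace X}"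
    unfolding cover_num_def using assms unfolding has_finite_subcover_def by (intro Inf_nat_def1) auto
  then show ?thesis using that by auto
qed

lemma cover_num_pos:
  assumes "has_finite_subcover X \<U>" and "topspace X \<noteq> {}"
  shows "0 < cover_num X \<U>"
  using assms by (metis Union_empty card_gt_0_iff cover_num_attained)

lemma funpow_in_topspace:
  "(\<And>x. x \<in> topspace X \<Longrightarrow> T x \<in> topspace X) \<Longrightarrow> x \<in> topspace X \<Longrightarrow> (T ^^ m) x \<in> topspace X"
  by (induction m) auto

lemma join_cover_add:
  assumes T: "\<And>x. x \<in> topspace X \<Longrightarrow> T x \<in> topspace X"
    and E1: "E1 \<in> join_cover X T \<U> m" and E2: "E2 \<in> join_cover X T \<U> n"
  shows "E1 \<inter> (T ^^ m) -` E2 \<in> join_cover X T \<U> (m + n)"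
proof -
  obtain U1 where U1: "\<forall>i<m. U1 i \<in> \<U>" "E1 = topspace X \<inter> (\<Inter>i<m. (T ^^ i) -` U1 i)"
    using E1 unfolding join_cover_def by auto
  obtain U2 where U2: "\<forall>i<n. U2 i \<in> \<U>" "E2 = topspace X \<inter> (\<Inter>i<n. (T ^^ i) -` U2 i)"
    using E2 unfolding join_cover_def by auto
  define U where "U i = (if i < m then U1 i else U2 (i - m))" for i
  have split: "(\<forall>i\<in>{..<m+n}. P i) \<longleftrightarrow> (\<forall>i\<in>{..<m}. P i) \<and> (\<forall>j\<in>{..<n}. P (j + m))" for P
    by (auto, metis add.commute add_diff_inverse_nat lessThan_iff nat_add_left_cancel_less)
  have "x \<in> E1 \<inter> (T ^^ m) -` E2 \<longleftrightarrow> x \<in> topspace X \<inter> (\<Inter>i<m+n. (T ^^ i) -` U i)" for x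
    using funpow_in_topspace[of X T, OF T, of x m] unfolding U1(2) U2(2)
    by (simp add: split U_def funpow_add) blast
  then have "E1 \<inter> (T ^^ m) -` E2 = topspace X \<inter> (\<Inter>i<m+n. (T ^^ i) -` U i)" by blast
  moreover have "\<forall>i<m+n. U i \<in> \<U>" unfolding U_def using U1 U2 by auto
  ultimately show ?thesis unfolding join_cover_def by auto
qed

lemma cover_num_join_add_le:
  assumes T: "\<And>x. x \<in> topspace X \<Longrightarrow> T x \<in> topspace X"
    and fin: "\<And>n. has_finite_subcover X (join_cover X T \<U> n)"
  shows "cover_num X (join_cover X T \<U> (m + n))
           \<le> cover_num X (join_cover X T \<U> m) * cover_num X (join_cover X T \<U> n)"
proof -
  obtain \<V>1 where \<V>1: "\<V>1 \<subseteq> join_cover X T \<U> m" "finite \<V>1" "\<Union>\<V>1 = topspace X"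
      "card \<V>1 = cover_num X (join_cover X T \<U> m)"
    by (rule cover_num_attained[OF fin])
  obtain \<V>2 where \<V>2: "\<V>2 \<subseteq> join_cover X T \<U> n" "finite \<V>2" "\<Union>\<V>2 = topspace X"
      "card \<V>2 = cover_num X (join_cover X T \<U> n)"
    by (rule cover_num_attained[OF fin])
  define \<W> where "\<W> = (\<lambda>(E1, E2). E1 \<inter> (T ^^ m) -` E2) ` (\<V>1 \<times> \<V>2)"
  have "E1 \<inter> (T ^^ m) -` E2 \<in> join_cover X T \<U> (m + n)" if "E1 \<in> \<V>1" "E2 \<in> \<V>2" for E1 E2
    by (rule join_cover_add[of X T, OF T]) (use that \<V>1(1) \<V>2(1) in auto)
  then have "\<W> \<subseteq> join_cover X T \<U> (m + n)" unfolding \<W>_def by auto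
  moreover have "finite \<W>" unfolding \<W>_def using \<V>1(2) \<V>2(2) by simp
  moreover have "\<Union>\<W> = topspace X"
  proof
    show "\<Union>\<W> \<subseteq> topspace X" unfolding \<W>_def using \<V>1(3) by auto
    show "topspace X \<subseteq> \<Union>\<W>"
    proof
      fix x assume x: "x \<in> topspace X"
      have "x \<in> \<Union>\<V>1" "(T ^^ m) x \<in> \<Union>\<V>2"
        using \<V>1(3) \<V>2(3) x funpow_in_topspace[of X T, OF T x] by simp_all
      then obtain E1 E2 where E1: "E1 \<in> \<V>1" "x \<in> E1" and E2: "E2 \<in> \<V>2" "(T ^^ m) x \<in> E2"
        by blast
      have "E1 \<inter> (T ^^ m) -` E2 \<in> \<W>"
        unfolding \<W>_def using E1(1) E2(1) by (intro image_eqI[of _ _ "(E1, E2)"]) auto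
      then show "x \<in> \<Union>\<W>" using E1(2) E2(2) by blast
    qed
  qed
  ultimately have "cover_num X (join_cover X T \<U> (m + n)) \<le> card \<W>" by (rule cover_num_le)
  also have "\<dots> \<le> card \<V>1 * card \<V>2"
    unfolding \<W>_def using card_image_le[of "\<V>1 \<times> \<V>2"] \<V>1(2) \<V>2(2) by (simp add: card_cartesian_product)
  finally show ?thesis using \<V>1(4) \<V>2(4) by simp
qed

lemma convergent_cover_num_join:
  assumes T: "\<And>x. x \<in> topspace X \<Longrightarrow> T x \<in> topspace X" and ne: "topspace X \<noteq> {}"
    and fin: "\<And>n. has_finite_subcover X (join_cover X T \<U> n)"
  shows "convergent (\<lambda>n. ln (real (cover_num X (join_cover X T \<U> n))) / real n)"
proof (rule subadditive_convergent)
  let ?N = "\<lambda>n. real (cover_num X (join_cover X T \<U> n))"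
  have pos: "0 < ?N n" for n using cover_num_pos[OF fin ne] by simp
  show "0 \<le> ln (?N n)" for n using pos[of n] by simp
  fix m n
  have "?N (m + n) \<le> ?N m * ?N n"
    using cover_num_join_add_le[of X T, OF T fin, of m n] by (metis of_nat_le_iff of_nat_mult)
  then have "ln (?N (m + n)) \<le> ln (?N m * ?N n)"
    using pos[of "m + n"] by simp
  then show "ln (?N (m + n)) \<le> ln (?N m) + ln (?N n)"
    using pos[of m] pos[of n] by (simp add: ln_mult)
qed

lemma cover_entropy_mono:
  assumes "\<And>x. x \<in> topspace X \<Longrightarrow> T x \<in> topspace X" "topspace X \<noteq> {}"
    and "\<And>y. y \<in> topspace Y \<Longrightarrow> S y \<in> topspace Y" "topspace Y \<noteq> {}"
    and fin_X: "\<And>n. has_finite_subcover X (join_cover X T \<U> n)"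
    and fin_Y: "\<And>n. has_finite_subcover Y (join_cover Y S \<V> n)"
    and le: "\<And>n. cover_num X (join_cover X T \<U> n) \<le> cover_num Y (join_cover Y S \<V> n)"
  shows "cover_entropy X T \<U> \<le> cover_entropy Y S \<V>"
proof -
  have "ln (real (cover_num X (join_cover X T \<U> n))) / real n
          \<le> ln (real (cover_num Y (join_cover Y S \<V> n))) / real n" for n
    using cover_num_pos[OF fin_X \<open>topspace X \<noteq> {}\<close>, of n] le[of n] by (simp add: divide_right_mono)
  moreover obtain a b where
    "(\<lambda>n. ln (real (cover_num X (join_cover X T \<U> n))) / real n) \<longlonglongrightarrow> a"
    "(\<lambda>n. ln (real (cover_num Y (join_cover Y S \<V> n))) / real n) \<longlonglongrightarrow> b"
    using convergent_cover_num_join[of X T, OF assms(1,2) fin_X]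
      convergent_cover_num_join[of Y S, OF assms(3,4) fin_Y] unfolding convergent_def by blast
  ultimately show ?thesis
    unfolding cover_entropy_def by (simp add: limI LIMSEQ_le)
qed

section \<open>Comparing cover numbers through evaluation characters\<close>

lemma topspace_max_ideal_space [simp]: "topspace (max_ideal_space A) = chars A"
  unfolding max_ideal_space_def by simp

definition window :: "('c \<Rightarrow> arith) \<Rightarrow> nat \<Rightarrow> nat \<times> 'c \<Rightarrow> complex" where
  "window \<phi> k = (\<lambda>(t, c). \<phi> c (k + t))"

text \<open>Take a maximal separated set of times; a character is first approximated by a single
  evaluation character, and that time is close to one of the set.\<close>

lemma spanning_times_exist:
  assumes anqie: "anqie A" and \<phi>A: "\<And>c. c \<in> J \<Longrightarrow> \<phi> c \<in> A" and J: "finite J" and r: "0 < r"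
  obtains S where "finite S" "separated (window \<phi>) ({..<n} \<times> J) (r/2) S"
    "\<forall>\<sigma>\<in>chars A. \<exists>s\<in>S. \<forall>t<n. \<forall>c\<in>J. cmod (\<sigma> ((shiftA ^^ t) (\<phi> c)) - \<phi> c (s + t)) < r"
proof -
  have I: "finite ({..<n} \<times> J)" using J by simp
  have "cmod (\<phi> c m) \<le> (\<Sum>c\<in>J. supnorm (\<phi> c))" if "c \<in> J" for c m
    using norm_le_supnorm[OF anqie_subset_linf[OF anqie \<phi>A[OF that]], of m] that J
      member_le_sum[of c J "\<lambda>c. supnorm (\<phi> c)"] supnorm_nonneg[OF anqie_subset_linf[OF anqie \<phi>A]]
    by fastforce
  then have R: "cmod (window \<phi> k x) \<le> (\<Sum>c\<in>J. supnorm (\<phi> c))" if "x \<in> {..<n} \<times> J" for k x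
    using that unfolding window_def by auto
  obtain S where S: "finite S" "separated (window \<phi>) ({..<n} \<times> J) (r/2) S"
    "\<forall>k. \<exists>s\<in>S. \<forall>x\<in>{..<n} \<times> J. cmod (window \<phi> k x - window \<phi> s x) < r/2"
    using maximal_separated_exists[of _ "r/2" "window \<phi>", OF I _ R] r by auto
  have "\<exists>s\<in>S. \<forall>t<n. \<forall>c\<in>J. cmod (\<sigma> ((shiftA ^^ t) (\<phi> c)) - \<phi> c (s + t)) < r"
    if \<sigma>: "\<sigma> \<in> chars A" for \<sigma>
  proof -
    have "(shiftA ^^ fst x) (\<phi> (snd x)) \<in> A" if "x \<in> {..<n} \<times> J" for x
      using that anqie_funpow_shiftA[OF anqie \<phi>A] by auto
    then obtain k where k: "\<forall>x\<in>{..<n} \<times> J.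
        cmod ((shiftA ^^ fst x) (\<phi> (snd x)) k - \<sigma> ((shiftA ^^ fst x) (\<phi> (snd x)))) < r/2"
      using char_approx_by_eval[OF \<sigma> anqie I, of "\<lambda>x. (shiftA ^^ fst x) (\<phi> (snd x))" "r/2"] r by auto
    obtain s where s: "s \<in> S" "\<forall>x\<in>{..<n} \<times> J. cmod (window \<phi> k x - window \<phi> s x) < r/2"
      using S(3) by blast
    have "cmod (\<sigma> ((shiftA ^^ t) (\<phi> c)) - \<phi> c (s + t)) < r" if "t < n" "c \<in> J" for t c
    proof -
      have "cmod (\<phi> c (k + t) - \<sigma> ((shiftA ^^ t) (\<phi> c))) < r/2"
        using k that by (simp add: funpow_shiftA)
      moreover have "cmod (\<phi> c (k + t) - \<phi> c (s + t)) < r/2"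
        using s(2) that unfolding window_def by auto
      ultimately show ?thesis
        using norm_triangle_ineq[of "\<sigma> ((shiftA ^^ t) (\<phi> c)) - \<phi> c (k + t)" "\<phi> c (k + t) - \<phi> c (s + t)"]
        by (simp add: norm_minus_commute)
    qed
    then show ?thesis using s(1) by blast
  qed
  then show ?thesis using that S(1,2) by blast
qed

lemma join_cover_num_le_card:
  assumes anqie: "anqie A" and \<phi>A: "\<And>c. c \<in> J \<Longrightarrow> \<phi> c \<in> A"
    and Lebesgue: "\<forall>\<rho>\<in>chars A. \<exists>V\<in>\<U>. chars A \<inter> coord_box \<phi> J (\<lambda>c. \<rho> (\<phi> c)) \<eta> \<subseteq> V"
    and S: "finite S"
    and spanning: "\<forall>\<sigma>\<in>chars A. \<exists>s\<in>S. \<forall>t<n. \<forall>c\<in>J. cmod (\<sigma> ((shiftA ^^ t) (\<phi> c)) - \<phi> c (s + t)) < \<eta>"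
  shows "has_finite_subcover (max_ideal_space A) (join_cover (max_ideal_space A) (dual_shift A) \<U> n)"
    and "cover_num (max_ideal_space A) (join_cover (max_ideal_space A) (dual_shift A) \<U> n) \<le> card S"
proof -
  let ?X = "max_ideal_space A" and ?T = "dual_shift A"
  have "\<forall>s t. \<exists>V. V \<in> \<U> \<and> chars A \<inter> coord_box \<phi> J (\<lambda>c. (?T ^^ t) (eval_char A s) (\<phi> c)) \<eta> \<subseteq> V"
    using Lebesgue funpow_dual_shift_in_chars[OF anqie eval_char_in_chars[OF anqie]] by blast
  then obtain V where V: "\<And>s t. V s t \<in> \<U>"
    "\<And>s t. chars A \<inter> coord_box \<phi> J (\<lambda>c. (?T ^^ t) (eval_char A s) (\<phi> c)) \<eta> \<subseteq> V s t"
    by metis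
  define E where "E s = topspace ?X \<inter> (\<Inter>t<n. (?T ^^ t) -` V s t)" for s
  have E: "E s \<in> join_cover ?X ?T \<U> n" for s
    unfolding E_def join_cover_def using V(1) by blast
  have "\<Union>(E ` S) = topspace ?X"
  proof (intro antisym subsetI)
    fix \<sigma> assume \<sigma>: "\<sigma> \<in> topspace ?X"
    then obtain s where s: "s \<in> S" "\<forall>t<n. \<forall>c\<in>J. cmod (\<sigma> ((shiftA ^^ t) (\<phi> c)) - \<phi> c (s + t)) < \<eta>"
      using spanning by auto
    have "(?T ^^ t) \<sigma> \<in> V s t" if "t < n" for t
    proof -
      have "(?T ^^ t) \<sigma> \<in> chars A" using funpow_dual_shift_in_chars[OF anqie] \<sigma> by simp
      moreover have "(?T ^^ t) \<sigma> \<in> coord_box \<phi> J (\<lambda>c. (?T ^^ t) (eval_char A s) (\<phi> c)) \<eta>"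
        using s(2) that funpow_dual_shift_apply[OF anqie \<phi>A] funpow_dual_shift_eval_char[OF anqie \<phi>A]
        unfolding coord_box_def by simp
      ultimately show ?thesis using V(2) by blast
    qed
    then show "\<sigma> \<in> \<Union>(E ` S)" using \<sigma> s(1) unfolding E_def by blast
  qed (auto simp: E_def)
  then show "has_finite_subcover ?X (join_cover ?X ?T \<U> n)"
    unfolding has_finite_subcover_def using E S by (intro exI[of _ "E ` S"]) auto
  have "cover_num ?X (join_cover ?X ?T \<U> n) \<le> card (E ` S)"
    using E S \<open>\<Union>(E ` S) = topspace ?X\<close> by (intro cover_num_le) auto
  also have "\<dots> \<le> card S" using S by (rule card_image_le)
  finally show "cover_num ?X (join_cover ?X ?T \<U> n) \<le> card S" .
qed

definition box_cover :: "arith set \<Rightarrow> ('c \<Rightarrow> arith) \<Rightarrow> 'c set \<Rightarrow> real \<Rightarrow> (arith \<Rightarrow> complex) set set" where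
  "box_cover B \<psi> J \<theta> = range (\<lambda>z. chars B \<inter> coord_box \<psi> J z \<theta>)"

lemma box_cover_open_covers:
  assumes "finite J" "0 < \<theta>"
  shows "box_cover B \<psi> J \<theta> \<in> open_covers (max_ideal_space B)"
proof -
  have open_box: "openin (max_ideal_space B) (chars B \<inter> coord_box \<psi> J z \<theta>)" for z
    unfolding max_ideal_space_def by (rule openin_open_Int[OF open_coord_box[OF assms(1)]])
  have "\<sigma> \<in> chars B \<inter> coord_box \<psi> J (\<lambda>c. \<sigma> (\<psi> c)) \<theta>" if "\<sigma> \<in> chars B" for \<sigma>
    using that assms(2) unfolding coord_box_def by simp
  then have "\<Union>(box_cover B \<psi> J \<theta>) = topspace (max_ideal_space B)"
    unfolding box_cover_def by auto
  moreover have "openin (max_ideal_space B) V" if "V \<in> box_cover B \<psi> J \<theta>" for V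
    using that open_box unfolding box_cover_def by blast
  ultimately show ?thesis by (simp add: open_covers_def)
qed

lemma has_finite_subcover_join_box_cover:
  assumes anqie: "anqie B" and \<psi>B: "\<And>c. c \<in> J \<Longrightarrow> \<psi> c \<in> B" and J: "finite J" and \<theta>: "0 < \<theta>"
  shows "has_finite_subcover (max_ideal_space B)
           (join_cover (max_ideal_space B) (dual_shift B) (box_cover B \<psi> J \<theta>) n)"
proof -
  let ?X = "max_ideal_space B" and ?T = "dual_shift B"
  obtain K where K: "finite K" "separated (window \<psi>) ({..<n} \<times> J) (\<theta>/2) K"
    "\<forall>\<sigma>\<in>chars B. \<exists>k\<in>K. \<forall>t<n. \<forall>c\<in>J. cmod (\<sigma> ((shiftA ^^ t) (\<psi> c)) - \<psi> c (k + t)) < \<theta>"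
    by (rule spanning_times_exist[OF anqie \<psi>B J \<theta>])
  define E where "E k = topspace ?X \<inter> (\<Inter>t<n. (?T ^^ t) -` (chars B \<inter> coord_box \<psi> J (\<lambda>c. \<psi> c (k + t)) \<theta>))"
    for k
  have "E k \<in> join_cover ?X ?T (box_cover B \<psi> J \<theta>) n" for k
    unfolding E_def join_cover_def box_cover_def
    by (intro CollectI exI[of _ "\<lambda>t. chars B \<inter> coord_box \<psi> J (\<lambda>c. \<psi> c (k + t)) \<theta>"]) auto
  moreover have "\<Union>(E ` K) = topspace ?X"
  proof (intro antisym subsetI)
    fix \<sigma> assume \<sigma>: "\<sigma> \<in> topspace ?X"
    then obtain k where "k \<in> K" "\<forall>t<n. \<forall>c\<in>J. cmod (\<sigma> ((shiftA ^^ t) (\<psi> c)) - \<psi> c (k + t)) < \<theta>"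
      using K(3) by auto
    moreover have "(?T ^^ t) \<sigma> \<in> chars B" for t using funpow_dual_shift_in_chars[OF anqie] \<sigma> by simp
    ultimately show "\<sigma> \<in> \<Union>(E ` K)"
      using \<sigma> unfolding E_def coord_box_def by (auto simp: funpow_dual_shift_apply[OF anqie \<psi>B])
  qed (auto simp: E_def)
  ultimately show ?thesis
    unfolding has_finite_subcover_def using K(1) by (intro exI[of _ "E ` K"]) auto
qed

lemma join_box_cover_itinerary:
  assumes anqie: "anqie B" and \<psi>B: "\<And>c. c \<in> J \<Longrightarrow> \<psi> c \<in> B"
    and E: "E \<in> join_cover (max_ideal_space B) (dual_shift B) (box_cover B \<psi> J \<theta>) n"
  obtains z where "\<forall>k. eval_char B k \<in> E \<longrightarrow> (\<forall>t<n. \<forall>c\<in>J. cmod (\<psi> c (k + t) - z t c) < \<theta>)"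
proof -
  let ?T = "dual_shift B"
  obtain U where U: "E = topspace (max_ideal_space B) \<inter> (\<Inter>t<n. (?T ^^ t) -` U t)"
    "\<forall>t<n. U t \<in> box_cover B \<psi> J \<theta>"
    using E unfolding join_cover_def by auto
  have "\<forall>t. \<exists>z. t < n \<longrightarrow> U t = chars B \<inter> coord_box \<psi> J z \<theta>"
    using U(2) unfolding box_cover_def by blast
  then obtain z where z: "\<And>t. t < n \<Longrightarrow> U t = chars B \<inter> coord_box \<psi> J (z t) \<theta>" by metis
  have "cmod (\<psi> c (k + t) - z t c) < \<theta>" if "eval_char B k \<in> E" "t < n" "c \<in> J" for k t c
  proof -
    have "(?T ^^ t) (eval_char B k) \<in> coord_box \<psi> J (z t) \<theta>" using that U(1) z by auto
    then have "cmod ((?T ^^ t) (eval_char B k) (\<psi> c) - z t c) < \<theta>"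
      using that(3) unfolding coord_box_def by blast
    then show ?thesis using funpow_dual_shift_eval_char[OF anqie \<psi>B[OF that(3)]] by simp
  qed
  then show ?thesis using that by blast
qed

text \<open>Distinct times of a \<open>4\<theta>\<close>-separated set for \<open>\<phi>\<close> have evaluation characters in distinct members
  of any subcover of the join of boxes of radius \<open>\<theta>\<close> for a \<open>\<theta>\<close>-perturbation \<open>\<psi>\<close> of \<open>\<phi>\<close>.\<close>

lemma card_separated_le_join_cover_num:
  assumes anqie: "anqie B" and \<psi>B: "\<And>c. c \<in> J \<Longrightarrow> \<psi> c \<in> B"
    and close: "\<And>c m. c \<in> J \<Longrightarrow> cmod (\<psi> c m - \<phi> c m) < \<theta>"
    and sep: "separated (window \<phi>) ({..<n} \<times> J) (4 * \<theta>) S"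
    and fin: "has_finite_subcover (max_ideal_space B) (join_cover (max_ideal_space B) (dual_shift B) (box_cover B \<psi> J \<theta>) n)"
  shows "card S \<le> cover_num (max_ideal_space B) (join_cover (max_ideal_space B) (dual_shift B) (box_cover B \<psi> J \<theta>) n)"
proof -
  let ?X = "max_ideal_space B" and ?T = "dual_shift B"
  obtain \<W> where \<W>: "\<W> \<subseteq> join_cover ?X ?T (box_cover B \<psi> J \<theta>) n" "finite \<W>" "\<Union>\<W> = topspace ?X"
    "card \<W> = cover_num ?X (join_cover ?X ?T (box_cover B \<psi> J \<theta>) n)"
    by (rule cover_num_attained[OF fin])
  have "\<exists>W\<in>\<W>. eval_char B s \<in> W" for s
    using \<W>(3) eval_char_in_chars[OF anqie] by (metis UnionE topspace_max_ideal_space)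
  then obtain pick where pick: "\<And>s. pick s \<in> \<W>" "\<And>s. eval_char B s \<in> pick s" by metis
  have "inj_on pick S"
  proof (rule inj_onI, rule ccontr)
    fix s s' assume s: "s \<in> S" "s' \<in> S" "pick s = pick s'" "s \<noteq> s'"
    then obtain x where x: "x \<in> {..<n} \<times> J" "4 * \<theta> \<le> cmod (window \<phi> s x - window \<phi> s' x)"
      using sep unfolding separated_def by blast
    obtain t c where x_eq: "x = (t, c)" by fastforce
    then have tc: "t < n" "c \<in> J" "4 * \<theta> \<le> cmod (\<phi> c (s + t) - \<phi> c (s' + t))"
      using x unfolding window_def by simp_all
    have "pick s \<in> join_cover ?X ?T (box_cover B \<psi> J \<theta>) n" using pick(1) \<W>(1) by blast
    then obtain z where z: "\<forall>k. eval_char B k \<in> pick s \<longrightarrow> (\<forall>t<n. \<forall>c\<in>J. cmod (\<psi> c (k + t) - z t c) < \<theta>)"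
      using join_box_cover_itinerary[where \<psi>=\<psi> and J=J, OF anqie \<psi>B] by blast
    have "cmod (\<phi> c (s + t) - \<psi> c (s + t)) < \<theta>" "cmod (\<psi> c (s' + t) - \<phi> c (s' + t)) < \<theta>"
      using close[OF tc(2)] by (simp_all add: norm_minus_commute)
    moreover have "cmod (\<psi> c (s + t) - z t c) < \<theta>" "cmod (z t c - \<psi> c (s' + t)) < \<theta>"
      using z pick(2)[of s] pick(2)[of s'] s(3) tc(1,2) by (auto simp: norm_minus_commute)
    ultimately have "cmod (\<phi> c (s + t) - \<phi> c (s' + t)) < \<theta> + \<theta> + \<theta> + \<theta>"
      by (meson norm_diff_triangle_less)
    then show False using tc(3) by simp
  qed
  then have "card S \<le> card \<W>" using pick(1) \<W>(2) by (intro card_inj_on_le) auto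
  then show ?thesis using \<W>(4) by simp
qed

section \<open>Perturbing the generators\<close>

lemma dual_shift_in_topspace:
  "anqie A \<Longrightarrow> \<rho> \<in> topspace (max_ideal_space A) \<Longrightarrow> dual_shift A \<rho> \<in> topspace (max_ideal_space A)"
  using dual_shift_in_chars by simp

lemma topspace_max_ideal_space_nonempty: "anqie A \<Longrightarrow> topspace (max_ideal_space A) \<noteq> {}"
  using eval_char_in_chars by auto

definition orbit :: "(nat \<Rightarrow> arith) \<Rightarrow> nat \<times> nat \<Rightarrow> arith" where
  "orbit f c = (shiftA ^^ snd c) (f (fst c))"

lemma orbit_apply: "orbit f c m = f (fst c) (m + snd c)"
  unfolding orbit_def by (simp add: funpow_shiftA)

lemma orbit_in_anqie_gen: "(\<And>i. f i \<in> linf) \<Longrightarrow> orbit f c \<in> anqie_gen (range f)"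
  unfolding orbit_def using anqie_gen_subset[of "range f"]
  by (intro anqie_funpow_shiftA[OF anqie_anqie_gen]) auto

lemma anqie_gen_cover_Lebesgue:
  assumes f: "\<And>i. f i \<in> linf" and \<U>: "\<U> \<in> open_covers (max_ideal_space (anqie_gen (range f)))"
  obtains J \<eta> where "finite J" "0 < \<eta>"
    "\<forall>\<rho>\<in>chars (anqie_gen (range f)).
      \<exists>V\<in>\<U>. chars (anqie_gen (range f)) \<inter> coord_box (orbit f) J (\<lambda>c. \<rho> (orbit f c)) \<eta> \<subseteq> V"
proof (rule coord_box_Lebesgue)
  show "compact (chars (anqie_gen (range f)))"
    using f by (intro compact_chars anqie_anqie_gen) auto
  show "\<rho> = \<sigma>" if "\<rho> \<in> chars (anqie_gen (range f))" "\<sigma> \<in> chars (anqie_gen (range f))"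
    "\<And>c. \<rho> (orbit f c) = \<sigma> (orbit f c)" for \<rho> \<sigma>
  proof (rule chars_anqie_gen_eqI[OF f that(1,2)])
    show "\<rho> ((shiftA ^^ m) (f i)) = \<sigma> ((shiftA ^^ m) (f i))" for i m
      using that(3)[of "(i, m)"] unfolding orbit_def by simp
  qed
  show "openin (top_of_set (chars (anqie_gen (range f)))) V" if "V \<in> \<U>" for V
    using \<U> that unfolding open_covers_def max_ideal_space_def by blast
  show "chars (anqie_gen (range f)) \<subseteq> \<Union>\<U>"
    using \<U> unfolding open_covers_def by simp
qed (use that in blast)+

text \<open>The witness cover for \<open>g\<close> consists of the boxes of radius \<open>\<eta>/8\<close>: an \<open>\<eta>/2 = 4 (\<eta>/8)\<close>-separated
  set of times for \<open>f\<close> bounds the cover numbers for \<open>\<U>\<close> from above and those for the boxes from below.\<close>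

lemma cover_entropy_le_anqie_entropy_perturbation:
  fixes f g :: "nat \<Rightarrow> arith"
  defines "A \<equiv> anqie_gen (range f)" and "B \<equiv> anqie_gen (range g)"
  assumes f: "\<And>i. f i \<in> linf" and g: "\<And>i. g i \<in> linf" and J: "finite J" and \<eta>: "0 < \<eta>"
    and Lebesgue: "\<forall>\<rho>\<in>chars A. \<exists>V\<in>\<U>. chars A \<inter> coord_box (orbit f) J (\<lambda>c. \<rho> (orbit f c)) \<eta> \<subseteq> V"
    and close: "\<And>i m. cmod (g i m - f i m) < \<eta> / 8"
  shows "ereal (cover_entropy (max_ideal_space A) (dual_shift A) \<U>) \<le> anqie_entropy (range g)"
proof -
  have A: "anqie A" and B: "anqie B"
    unfolding A_def B_def using f g by (auto intro: anqie_anqie_gen)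
  have fA: "orbit f c \<in> A" and gB: "orbit g c \<in> B" for c
    unfolding A_def B_def using f g by (auto intro: orbit_in_anqie_gen)
  have close_orbit: "cmod (orbit g c m - orbit f c m) < \<eta> / 8" for c m
    using close by (simp add: orbit_apply)
  have "has_finite_subcover (max_ideal_space A) (join_cover (max_ideal_space A) (dual_shift A) \<U> n) \<and>
    has_finite_subcover (max_ideal_space B)
      (join_cover (max_ideal_space B) (dual_shift B) (box_cover B (orbit g) J (\<eta> / 8)) n) \<and>
    cover_num (max_ideal_space A) (join_cover (max_ideal_space A) (dual_shift A) \<U> n)
      \<le> cover_num (max_ideal_space B) (join_cover (max_ideal_space B) (dual_shift B) (box_cover B (orbit g) J (\<eta> / 8)) n)"
    for n
  proof -
    obtain S where S: "finite S" "separated (window (orbit f)) ({..<n} \<times> J) (\<eta> / 2) S"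
      "\<forall>\<sigma>\<in>chars A. \<exists>s\<in>S. \<forall>t<n. \<forall>c\<in>J. cmod (\<sigma> ((shiftA ^^ t) (orbit f c)) - orbit f c (s + t)) < \<eta>"
      by (rule spanning_times_exist[OF A fA J \<eta>])
    have fin_B: "has_finite_subcover (max_ideal_space B)
        (join_cover (max_ideal_space B) (dual_shift B) (box_cover B (orbit g) J (\<eta> / 8)) n)"
      using \<eta> by (intro has_finite_subcover_join_box_cover[OF B gB J]) simp
    have "separated (window (orbit f)) ({..<n} \<times> J) (4 * (\<eta> / 8)) S" using S(2) by simp
    then have "card S \<le> cover_num (max_ideal_space B)
        (join_cover (max_ideal_space B) (dual_shift B) (box_cover B (orbit g) J (\<eta> / 8)) n)"
      by (rule card_separated_le_join_cover_num[OF B gB close_orbit _ fin_B])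
    then show ?thesis
      using join_cover_num_le_card[OF A fA Lebesgue S(1,3)] fin_B by (blast intro: order_trans)
  qed
  then have "cover_entropy (max_ideal_space A) (dual_shift A) \<U>
      \<le> cover_entropy (max_ideal_space B) (dual_shift B) (box_cover B (orbit g) J (\<eta> / 8))"
    using \<eta> by (intro cover_entropy_mono dual_shift_in_topspace topspace_max_ideal_space_nonempty A B) auto
  moreover have "ereal (cover_entropy (max_ideal_space B) (dual_shift B) (box_cover B (orbit g) J (\<eta> / 8)))
      \<le> anqie_entropy (range g)"
    unfolding anqie_entropy_def top_entropy_def B_def[symmetric]
    using J \<eta> by (intro SUP_upper box_cover_open_covers) auto
  ultimately show ?thesis by (meson ereal_less_eq(3) order_trans)
qed

lemma top_entropy_approx:
  assumes "top_entropy X T < \<infinity>" and "0 < \<epsilon>"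
  obtains \<U> where "\<U> \<in> open_covers X" "top_entropy X T - ereal \<epsilon> < ereal (cover_entropy X T \<U>)"
proof -
  have "{topspace X} \<in> open_covers X" unfolding open_covers_def by auto
  then have "ereal (cover_entropy X T {topspace X}) \<le> top_entropy X T"
    unfolding top_entropy_def by (rule SUP_upper)
  then obtain h where "top_entropy X T = ereal h" using assms(1) by (cases "top_entropy X T") auto
  then have "top_entropy X T - ereal \<epsilon> < top_entropy X T" using assms(2) by simp
  then show ?thesis using that unfolding top_entropy_def less_SUP_iff by blast
qed

lemma norm_less_of_SUP_supnorm_less:
  assumes "\<And>i. f i \<in> linf" "\<And>i. g i \<in> linf"
    and "(SUP i. ereal (supnorm (\<lambda>n. g i n - f i n))) < ereal \<delta>"
  shows "cmod (g i m - f i m) < \<delta>"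
proof -
  have "cmod (g i m - f i m) \<le> supnorm (\<lambda>n. g i n - f i n)"
    using assms(1,2) by (intro norm_le_supnorm anqie_diff[OF anqie_linf])
  moreover have "ereal (supnorm (\<lambda>n. g i n - f i n)) < ereal \<delta>"
    using assms(3) by (meson SUP_upper UNIV_I order_le_less_trans)
  ultimately show ?thesis by simp
qed

theorem theorem1p4:
  fixes f :: "nat \<Rightarrow> arith"
  assumes "\<forall>i. f i \<in> linf"
    and "anqie_entropy (range f) < \<infinity>"
  shows "\<forall>\<epsilon>>0. \<exists>\<delta>>0. \<forall>g :: nat \<Rightarrow> arith.
           (\<forall>i. g i \<in> linf) \<and> (SUP i. ereal (supnorm (\<lambda>n. g i n - f i n))) < ereal \<delta>
           \<longrightarrow> anqie_entropy (range g) > anqie_entropy (range f) - ereal \<epsilon>"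
proof (intro allI impI)
  fix \<epsilon> :: real assume "0 < \<epsilon>"
  have f: "\<And>i. f i \<in> linf" using assms(1) by blast
  let ?A = "anqie_gen (range f)"
  obtain \<U> where \<U>: "\<U> \<in> open_covers (max_ideal_space ?A)"
    "anqie_entropy (range f) - ereal \<epsilon> < ereal (cover_entropy (max_ideal_space ?A) (dual_shift ?A) \<U>)"
    using top_entropy_approx[OF assms(2)[unfolded anqie_entropy_def] \<open>0 < \<epsilon>\<close>]
    unfolding anqie_entropy_def by blast
  obtain J \<eta> where J: "finite J" "0 < \<eta>" and Lebesgue:
    "\<forall>\<rho>\<in>chars ?A. \<exists>V\<in>\<U>. chars ?A \<inter> coord_box (orbit f) J (\<lambda>c. \<rho> (orbit f c)) \<eta> \<subseteq> V"
    by (rule anqie_gen_cover_Lebesgue[OF f \<U>(1)])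
  have "anqie_entropy (range g) > anqie_entropy (range f) - ereal \<epsilon>"
    if g: "\<forall>i. g i \<in> linf" "(SUP i. ereal (supnorm (\<lambda>n. g i n - f i n))) < ereal (\<eta> / 8)" for g
  proof -
    have "cmod (g i m - f i m) < \<eta> / 8" for i m
      using g f by (intro norm_less_of_SUP_supnorm_less[where f=f]) auto
    then show ?thesis
      using cover_entropy_le_anqie_entropy_perturbation[OF f _ J Lebesgue] g(1) \<U>(2)
      by (meson order_less_le_trans)
  qed
  then show "\<exists>\<delta>>0. \<forall>g :: nat \<Rightarrow> arith. (\<forall>i. g i \<in> linf) \<and> (SUP i. ereal (supnorm (\<lambda>n. g i n - f i n))) < ereal \<delta>
      \<longrightarrow> anqie_entropy (range g) > anqie_entropy (range f) - ereal \<epsilon>"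
    using J(2) by (intro exI[of _ "\<eta> / 8"]) auto
qed

end
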